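(* Let $\log_{Ab}(x)=x+\sum_{i\ge1}m_ix^{i+1}$, $m_i\in\mathbb{Q}[a_1,a_2]$, be the logarithm of the universal Abel formal group law. Then for every $n\ge2$, $$m_{n-1}=\frac1n\prod_{j=1}^{n-1}\left(\frac{n-2j}{\sqrt{j(n-j)}}\sqrt{2a_2}-a_1\right),$$ where the right-hand side (in which the factors for $j$ and $n-j$ combine to $a_1^2-\frac{2(n-2j)^2}{j(n-j)}a_2$, and the factor for $j=n/2$ equals $-a_1$) is a polynomial in $a_1,a_2$.
   Context: The universal Abel formal group law is the formal group law over $\mathbb{Q}[a_1,a_2]$ ($a_1,a_2$ free parameters) of the form $\mathcal{F}_{Ab}(x,y)=xR(y)+yR(x)$ with $R(x)=1+\frac{a_1}{2}x+a_2x^2+a_3x^3+\cdots$, where the coefficients $a_n\in\mathbb{Q}[a_1,a_2]$, $n\ge3$, are uniquely determined by associativity (e.g. $a_3=-\frac23a_1a_2$, $a_4=\frac12a_1^2a_2-\frac12a_2^2$). Its logarithm is $\log_{Ab}(x)=\int_0^x\frac{dt}{1+a_1t+a_2t^2+a_3t^3+\cdots}$; e.g. $m_1=-\frac12a_1$, $m_2=\frac13(a_1^2-a_2)$. *)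

theory Defs
  imports "HOL-Analysis.Analysis" "HOL-Computational_Algebra.Formal_Power_Series"
begin

text \<open>Formal power series in three variables x, y, z, represented by their
coefficient functions: s i j l is the coefficient of x^i y^j z^l.\<close>

type_synonym 'a ser3 = "nat \<Rightarrow> nat \<Rightarrow> nat \<Rightarrow> 'a"

definition add3 :: "'a::comm_ring_1 ser3 \<Rightarrow> 'a ser3 \<Rightarrow> 'a ser3" where
  "add3 f g = (\<lambda>i j l. f i j l + g i j l)"

definition mul3 :: "'a::comm_ring_1 ser3 \<Rightarrow> 'a ser3 \<Rightarrow> 'a ser3" where
  "mul3 f g = (\<lambda>i j l. \<Sum>p\<le>i. \<Sum>q\<le>j. \<Sum>r\<le>l. f p q r * g (i - p) (j - q) (l - r))"

definition one3 :: "'a::comm_ring_1 ser3" where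
  "one3 = (\<lambda>i j l. if i = 0 \<and> j = 0 \<and> l = 0 then 1 else 0)"

primrec pow3 :: "'a::comm_ring_1 ser3 \<Rightarrow> nat \<Rightarrow> 'a ser3" where
  "pow3 f 0 = one3"
| "pow3 f (Suc k) = mul3 f (pow3 f k)"

definition X3 :: "'a::comm_ring_1 ser3" where
  "X3 = (\<lambda>i j l. if i = 1 \<and> j = 0 \<and> l = 0 then 1 else 0)"
definition Y3 :: "'a::comm_ring_1 ser3" where
  "Y3 = (\<lambda>i j l. if i = 0 \<and> j = 1 \<and> l = 0 then 1 else 0)"
definition Z3 :: "'a::comm_ring_1 ser3" where
  "Z3 = (\<lambda>i j l. if i = 0 \<and> j = 0 \<and> l = 1 then 1 else 0)"

text \<open>Substitution of a series G (with zero constant term) into a one-variable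
power series with coefficients r: (r o G) = sum_k r_k G^k; only k <= i+j+l
contributes to the coefficient of x^i y^j z^l.\<close>
definition subst3 :: "(nat \<Rightarrow> 'a::comm_ring_1) \<Rightarrow> 'a ser3 \<Rightarrow> 'a ser3" where
  "subst3 r G = (\<lambda>i j l. \<Sum>k\<le>i+j+l. r k * pow3 G k i j l)"

definition abelR :: "(nat \<Rightarrow> 'a::field_char_0) \<Rightarrow> nat \<Rightarrow> 'a" where
  "abelR a n = (if n = 0 then 1 else if n = 1 then a 1 / 2 else a n)"

definition abelF :: "(nat \<Rightarrow> 'a::field_char_0) \<Rightarrow> 'a ser3 \<Rightarrow> 'a ser3 \<Rightarrow> 'a ser3" where
  "abelF a G H = add3 (mul3 G (subst3 (abelR a) H)) (mul3 H (subst3 (abelR a) G))"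

definition abel_assoc :: "(nat \<Rightarrow> 'a::field_char_0) \<Rightarrow> bool" where
  "abel_assoc a \<longleftrightarrow> abelF a (abelF a X3 Y3) Z3 = abelF a X3 (abelF a Y3 Z3)"

definition abel_log :: "(nat \<Rightarrow> 'a::field_char_0) \<Rightarrow> 'a fps" where
  "abel_log a = fps_integral (inverse (Abs_fps (\<lambda>n. if n = 0 then 1 else a n))) 0"

end

theory Submission
  imports Defs
begin

(* Write P = 1 + a_1 t + a_2 t^2 + ..., so that log' = 1/P. Comparing the coefficients of x^2 z
   in F(F(x,y),z) = F(x,F(y,z)) gives P^2 P'' = 2 a_2 (P - t P'), whose first integral is
   P P' = a_1 P + 2 a_2 t. If alpha + beta = a_1 and alpha beta = -2 a_2, this says exactly that
   exp(alpha log) = P - beta t. Hence the coefficients E_n(s) of exp(s log), which are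
   polynomials in s, satisfy s (n+1) E_(n+1)(s + alpha) = (s + alpha)(s - n beta) E_n(s), and this
   forces E_n(s) = s/n! prod_(j=1..n-1) (s - j alpha - (n-j) beta). The coefficient of s in E_n
   is the n-th coefficient of log; pairing the factors j and n - j turns the product into the
   stated form. *)

definition slice3 :: "nat \<Rightarrow> nat \<Rightarrow> 'a::comm_ring_1 ser3 \<Rightarrow> 'a fps" where
  "slice3 i l s = Abs_fps (\<lambda>j. s i j l)"

lemma slice3_nth [simp]: "fps_nth (slice3 i l s) j = s i j l"
  by (simp add: slice3_def)

lemma slice3_add3: "slice3 i l (add3 f g) = slice3 i l f + slice3 i l g"
  by (rule fps_ext) (simp add: add3_def)

lemma slice3_mul3:
  "slice3 i l (mul3 f g) = (\<Sum>p\<le>i. \<Sum>r\<le>l. slice3 p r f * slice3 (i - p) (l - r) g)"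
proof (rule fps_ext)
  fix j
  have "mul3 f g i j l = (\<Sum>p\<le>i. \<Sum>r\<le>l. \<Sum>q\<le>j. f p q r * g (i - p) (j - q) (l - r))"
    unfolding mul3_def by (intro sum.cong refl sum.swap)
  then show "fps_nth (slice3 i l (mul3 f g)) j =
      fps_nth (\<Sum>p\<le>i. \<Sum>r\<le>l. slice3 p r f * slice3 (i - p) (l - r) g) j"
    by (simp add: fps_sum_nth fps_mult_nth atLeast0AtMost)
qed

lemma slice3_mul3_low:
  "slice3 0 0 (mul3 f g) = slice3 0 0 f * slice3 0 0 g"
  "slice3 1 0 (mul3 f g) = slice3 0 0 f * slice3 1 0 g + slice3 1 0 f * slice3 0 0 g"
  "slice3 2 0 (mul3 f g) =
     slice3 0 0 f * slice3 2 0 g + slice3 1 0 f * slice3 1 0 g + slice3 2 0 f * slice3 0 0 g"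
  "slice3 2 1 (mul3 f g) =
     slice3 0 0 f * slice3 2 1 g + slice3 0 1 f * slice3 2 0 g + slice3 1 0 f * slice3 1 1 g
     + slice3 1 1 f * slice3 1 0 g + slice3 2 0 f * slice3 0 1 g + slice3 2 1 f * slice3 0 0 g"
  by (simp_all add: slice3_mul3 numeral_2_eq_2 algebra_simps)

lemma mul3_monomial:
  assumes "\<And>p q r. (p, q, r) \<noteq> (u, v, w) \<Longrightarrow> f p q r = 0"
  shows "mul3 f g i j l =
    (if u \<le> i \<and> v \<le> j \<and> w \<le> l then f u v w * g (i - u) (j - v) (l - w) else 0)"
proof -
  define c where "c = f u v w * g (i - u) (j - v) (l - w)"
  have if_out: "(\<Sum>x\<in>A. if P then h x else 0) = (if P then sum h A else 0)"
    for A P and h :: "nat \<Rightarrow> 'a"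
    by simp
  have "mul3 f g i j l = (\<Sum>p\<le>i. \<Sum>q\<le>j. \<Sum>r\<le>l.
      if p = u then if q = v then if r = w then c else 0 else 0 else 0)"
    unfolding mul3_def c_def by (intro sum.cong refl) (auto simp: assms)
  also have "\<dots> = (if u \<le> i \<and> v \<le> j \<and> w \<le> l then c else 0)"
    by (simp only: if_out sum.delta[OF finite_atMost] atMost_iff) auto
  finally show ?thesis
    by (simp add: c_def)
qed

lemma mul3_X3: "mul3 X3 g i j l = (if 1 \<le> i then g (i - 1) j l else 0)"
  by (subst mul3_monomial[where u = 1 and v = 0 and w = 0]) (auto simp: X3_def)

lemma mul3_Y3: "mul3 Y3 g i j l = (if 1 \<le> j then g i (j - 1) l else 0)"
  by (subst mul3_monomial[where u = 0 and v = 1 and w = 0]) (auto simp: Y3_def)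

lemma mul3_Z3: "mul3 Z3 g i j l = (if 1 \<le> l then g i j (l - 1) else 0)"
  by (subst mul3_monomial[where u = 0 and v = 0 and w = 1]) (auto simp: Z3_def)

lemma subst3_X3: "subst3 r X3 i j l = (if j = 0 \<and> l = 0 then r i else 0)"
proof -
  have pow: "pow3 X3 k i j l = (if i = k \<and> j = 0 \<and> l = 0 then 1 else 0)" for k
    by (induction k arbitrary: i) (auto simp: mul3_X3 one3_def)
  show ?thesis
    by (simp add: subst3_def pow if_distrib[of "\<lambda>x. r _ * x"] cong: if_cong)
qed

lemma subst3_Y3: "subst3 r Y3 i j l = (if i = 0 \<and> l = 0 then r j else 0)"
proof -
  have pow: "pow3 Y3 k i j l = (if i = 0 \<and> j = k \<and> l = 0 then 1 else 0)" for k
    by (induction k arbitrary: j) (auto simp: mul3_Y3 one3_def)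
  show ?thesis
    by (simp add: subst3_def pow if_distrib[of "\<lambda>x. r _ * x"] cong: if_cong)
qed

lemma subst3_Z3: "subst3 r Z3 i j l = (if i = 0 \<and> j = 0 then r l else 0)"
proof -
  have pow: "pow3 Z3 k i j l = (if i = 0 \<and> j = 0 \<and> l = k then 1 else 0)" for k
    by (induction k arbitrary: l) (auto simp: mul3_Z3 one3_def)
  show ?thesis
    by (simp add: subst3_def pow if_distrib[of "\<lambda>x. r _ * x"] cong: if_cong)
qed

lemma subst3_eq_0_if_x_free:
  assumes "\<And>i j l. 0 < i \<Longrightarrow> G i j l = 0" and "0 < i"
  shows "subst3 r G i j l = 0"
proof -
  have "pow3 G k i j l = 0" if "0 < i" for k i j l
    using that
  proof (induction k arbitrary: i j l)
    case 0
    then show ?case by (simp add: one3_def)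
  next
    case (Suc k)
    have "G p q r * pow3 G k (i - p) (j - q) (l - r) = 0" if "p \<le> i" for p q r
      using Suc assms(1) that by (cases "p = 0") auto
    then show ?case
      unfolding pow3.simps mul3_def by (intro sum.neutral ballI) auto
  qed
  then show ?thesis
    using assms(2) by (simp add: subst3_def)
qed

(* The x^0, x^1, x^2 rows of (X + x B + x^2 C)^k, namely X^k, k X^(k-1) B and
   k X^(k-1) C + binomial(k,2) X^(k-2) B^2, multiplied by powers of X to avoid negative exponents. *)
lemma slice3_pow3_rows:
  fixes G :: "'a::comm_ring_1 ser3"
  assumes G0: "slice3 0 0 G = fps_X"
  defines "B \<equiv> slice3 1 0 G" and "C \<equiv> slice3 2 0 G"
  shows "slice3 0 0 (pow3 G k) = fps_X ^ k \<and>
    fps_X * slice3 1 0 (pow3 G k) = of_nat k * fps_X ^ k * B \<and>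
    2 * fps_X\<^sup>2 * slice3 2 0 (pow3 G k) =
      fps_X ^ k * (2 * of_nat k * fps_X * C + of_nat k * (of_nat k - 1) * B\<^sup>2)"
proof (induction k)
  case 0
  have "slice3 i 0 (one3 :: 'a ser3) = (if i = 0 then 1 else 0)" for i
    by (rule fps_ext) (simp add: one3_def)
  then show ?case
    by simp
next
  case (Suc k)
  then have row0: "slice3 0 0 (pow3 G k) = fps_X ^ k"
    and row1: "fps_X * slice3 1 0 (pow3 G k) = of_nat k * fps_X ^ k * B"
    and row2: "2 * fps_X\<^sup>2 * slice3 2 0 (pow3 G k) =
      fps_X ^ k * (2 * of_nat k * fps_X * C + of_nat k * (of_nat k - 1) * B\<^sup>2)"
    by blast+
  have "fps_X * slice3 1 0 (pow3 G (Suc k)) =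
      fps_X * (fps_X * slice3 1 0 (pow3 G k)) + fps_X ^ Suc k * B"
    unfolding pow3.simps slice3_mul3_low by (simp add: G0 row0 B_def algebra_simps)
  moreover have "2 * fps_X\<^sup>2 * slice3 2 0 (pow3 G (Suc k)) =
      fps_X * (2 * fps_X\<^sup>2 * slice3 2 0 (pow3 G k))
      + 2 * fps_X * B * (fps_X * slice3 1 0 (pow3 G k)) + 2 * fps_X\<^sup>2 * C * fps_X ^ k"
    unfolding pow3.simps slice3_mul3_low
    by (simp add: G0 row0 B_def C_def algebra_simps power2_eq_square)
  ultimately show ?case
    unfolding row1 row2 pow3.simps slice3_mul3_low(1) G0 row0
    by (simp add: algebra_simps power2_eq_square)
qed

lemma fps_X_mult_deriv:
  fixes r :: "nat \<Rightarrow> 'a::comm_ring_1"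
  shows "fps_X * fps_deriv (Abs_fps r) = Abs_fps (\<lambda>k. of_nat k * r k)"
  by (rule fps_ext) (simp add: fps_X_mult_nth)

lemma fps_X_power2_mult_deriv2:
  fixes r :: "nat \<Rightarrow> 'a::comm_ring_1"
  shows "fps_X\<^sup>2 * fps_deriv (fps_deriv (Abs_fps r)) =
    Abs_fps (\<lambda>k. of_nat k * (of_nat k - 1) * r k)"
proof -
  have "fps_nth (fps_X\<^sup>2 * fps_deriv (fps_deriv (Abs_fps r))) k = of_nat k * (of_nat k - 1) * r k"
    for k
  proof (cases "k < 2")
    case False
    then obtain j where k: "k = Suc (Suc j)"
      by (metis add_2_eq_Suc le_Suc_ex not_less)
    have "(of_nat k - 1 :: 'a) = of_nat (Suc j)"
      unfolding k by (simp only: of_nat_Suc[of "Suc j"] add_diff_cancel_left')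
    then show ?thesis
      by (simp add: k fps_X_power_mult_nth)
  qed (auto simp: fps_X_power_mult_nth less_2_cases_iff)
  then show ?thesis
    by (intro fps_ext) simp
qed

lemma slice3_subst3_taylor2:
  fixes G :: "'a::idom ser3" and r :: "nat \<Rightarrow> 'a"
  assumes G0: "slice3 0 0 G = fps_X"
  defines "R \<equiv> Abs_fps r"
  shows "2 * slice3 2 0 (subst3 r G) =
    2 * fps_deriv R * slice3 2 0 G + fps_deriv (fps_deriv R) * (slice3 1 0 G)\<^sup>2"
proof -
  define B where "B = slice3 1 0 G"
  define C where "C = slice3 2 0 G"
  define D where "D k = fps_const (of_nat k) * (2 * fps_X * C)
    + fps_const (of_nat k * (of_nat k - 1)) * B\<^sup>2" for k
  have "fps_const (of_nat k * (of_nat k - 1)) = (of_nat k * (of_nat k - 1) :: 'a fps)" for k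
    by (metis fps_const_1_eq_1 fps_const_mult fps_const_sub fps_of_nat)
  then have rows: "2 * fps_X\<^sup>2 * slice3 2 0 (pow3 G k) = fps_X ^ k * D k" for k
    unfolding D_def using slice3_pow3_rows[OF G0]
    by (simp add: B_def C_def fps_of_nat mult.assoc mult.left_commute)
  have "fps_nth (2 * fps_X\<^sup>2 * slice3 2 0 (subst3 r G)) m =
      fps_nth (fps_X\<^sup>2 * (2 * fps_deriv R * C + fps_deriv (fps_deriv R) * B\<^sup>2)) m" for m
  proof -
    have "fps_nth (2 * fps_X\<^sup>2 * slice3 2 0 (subst3 r G)) m =
        (\<Sum>k\<le>m. r k * fps_nth (2 * fps_X\<^sup>2 * slice3 2 0 (pow3 G k)) m)"
    proof (cases "m < 2")
      case False
      then obtain n where "m = 2 + n + 0"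
        by (metis add_0_right le_Suc_ex not_less)
      then show ?thesis
        by (simp add: fps_X_power_mult_nth subst3_def sum_distrib_left algebra_simps
            flip: fps_numeral_fps_const)
    qed (simp add: fps_X_power_mult_nth mult.assoc flip: fps_numeral_fps_const)
    also have "\<dots> = (\<Sum>k\<le>m. r k * fps_nth (D k) (m - k))"
      by (intro sum.cong refl) (simp add: rows fps_X_power_mult_nth)
    also have "\<dots> = (\<Sum>k\<le>m. of_nat k * r k * fps_nth (2 * fps_X * C) (m - k)
        + of_nat k * (of_nat k - 1) * r k * fps_nth (B\<^sup>2) (m - k))"
      by (intro sum.cong refl) (simp add: D_def ring_distribs mult.assoc mult.left_commute)
    also have "\<dots> = fps_nth ((fps_X * fps_deriv R) * (2 * fps_X * C)
        + (fps_X\<^sup>2 * fps_deriv (fps_deriv R)) * B\<^sup>2) m"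
      unfolding R_def fps_X_mult_deriv fps_X_power2_mult_deriv2
      by (simp add: fps_mult_nth sum.distrib atLeast0AtMost)
    finally show ?thesis
      by (simp add: algebra_simps power2_eq_square)
  qed
  then have "fps_X\<^sup>2 * (2 * slice3 2 0 (subst3 r G)) =
      fps_X\<^sup>2 * (2 * fps_deriv R * C + fps_deriv (fps_deriv R) * B\<^sup>2)"
    by (intro fps_ext) (simp add: mult.assoc mult.left_commute)
  then show ?thesis
    by (simp add: B_def C_def)
qed

lemma slice3_abelF_X3_Y3:
  "slice3 i l (abelF a X3 Y3) =
    (if l = 0 then (if i = 1 then Abs_fps (abelR a) else 0) + fps_const (abelR a i) * fps_X else 0)"
  by (rule fps_ext) (auto simp: abelF_def add3_def mul3_X3 mul3_Y3 subst3_X3 subst3_Y3)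

lemma slice3_abelF_Y3_Z3:
  "slice3 i l (abelF a Y3 Z3) =
    (if i = 0 then fps_const (abelR a l) * fps_X + (if l = 1 then Abs_fps (abelR a) else 0) else 0)"
  by (rule fps_ext) (auto simp: abelF_def add3_def mul3_Y3 mul3_Z3 subst3_Y3 subst3_Z3)

lemma abel_assoc_slice3_subst3:
  assumes "abel_assoc a"
  shows "slice3 2 0 (subst3 (abelR a) (abelF a X3 Y3)) = fps_const (a 2) * Abs_fps (abelR a)"
proof -
  define R where "R = Abs_fps (abelR a)"
  define G where "G = abelF a X3 Y3"
  define H where "H = abelF a Y3 Z3"
  have RX: "slice3 i l (subst3 (abelR a) X3) = (if l = 0 then fps_const (abelR a i) else 0)" for i l
    by (rule fps_ext) (simp add: subst3_X3)
  have RZ: "slice3 i l (subst3 (abelR a) Z3) = (if i = 0 then fps_const (abelR a l) else 0)" for i l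
    by (rule fps_ext) (simp add: subst3_Z3)
  have "slice3 2 1 (abelF a G Z3) = slice3 2 1 (abelF a X3 H)"
    using assms unfolding abel_assoc_def G_def H_def by simp
  moreover have "slice3 2 1 (mul3 G (subst3 (abelR a) Z3)) =
      fps_const (a 2) * fps_X * fps_const (a 1 / 2)"
    unfolding slice3_mul3_low by (simp add: G_def slice3_abelF_X3_Y3 RZ abelR_def)
  moreover have "slice3 2 1 (mul3 Z3 (subst3 (abelR a) G)) = slice3 2 0 (subst3 (abelR a) G)"
    by (rule fps_ext) (simp add: mul3_Z3)
  moreover have "slice3 2 1 (mul3 X3 (subst3 (abelR a) H)) = 0"
  proof -
    have "H i j l = 0" if "0 < i" for i j l
      using arg_cong[OF slice3_abelF_Y3_Z3[of i l a], of "\<lambda>f. fps_nth f j"] that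
      by (simp add: H_def)
    then show ?thesis
      by (intro fps_ext) (simp add: mul3_X3 subst3_eq_0_if_x_free)
  qed
  moreover have "slice3 2 1 (mul3 H (subst3 (abelR a) X3)) =
      (fps_const (a 1 / 2) * fps_X + R) * fps_const (a 2)"
    unfolding slice3_mul3_low by (simp add: H_def slice3_abelF_Y3_Z3 RX R_def abelR_def)
  ultimately show ?thesis
    unfolding abelF_def[of a G Z3] abelF_def[of a X3 H] slice3_add3
    by (simp add: R_def G_def algebra_simps)
qed

definition abel_denom :: "(nat \<Rightarrow> 'a::field_char_0) \<Rightarrow> 'a fps" where
  "abel_denom a = Abs_fps (\<lambda>n. if n = 0 then 1 else a n)"

lemma abel_assoc_imp_denom_ode:
  fixes a :: "nat \<Rightarrow> 'a::field_char_0"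
  assumes "abel_assoc a"
  defines "P \<equiv> abel_denom a"
  shows "P\<^sup>2 * fps_deriv (fps_deriv P) = fps_const (2 * a 2) * (P - fps_X * fps_deriv P)"
proof -
  define G where "G = abelF a X3 Y3"
  have R: "Abs_fps (abelR a) = P - fps_const (a 1 / 2) * fps_X"
    by (rule fps_ext) (simp add: P_def abel_denom_def abelR_def)
  have G0: "slice3 0 0 G = fps_X"
    by (simp add: G_def slice3_abelF_X3_Y3 abelR_def)
  have "slice3 1 0 G = P"
    by (simp add: G_def slice3_abelF_X3_Y3 R abelR_def)
  moreover have "slice3 2 0 G = fps_const (a 2) * fps_X"
    by (simp add: G_def slice3_abelF_X3_Y3 abelR_def)
  moreover have "slice3 2 0 (subst3 (abelR a) G) = fps_const (a 2) * Abs_fps (abelR a)"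
    unfolding G_def by (rule abel_assoc_slice3_subst3[OF assms(1)])
  ultimately have "2 * (fps_const (a 2) * (P - fps_const (a 1 / 2) * fps_X)) =
      2 * (fps_deriv P - fps_const (a 1 / 2)) * (fps_const (a 2) * fps_X)
      + fps_deriv (fps_deriv P) * P\<^sup>2"
    using slice3_subst3_taylor2[OF G0, of "abelR a"] by (simp add: R)
  then show ?thesis
    by (simp add: algebra_simps fps_numeral_fps_const)
qed

lemma fps_eq_const_mult_if_wronskian_eq_0:
  fixes P Q :: "'a::field_char_0 fps"
  assumes "fps_nth P 0 \<noteq> 0" and "fps_deriv Q * P = Q * fps_deriv P"
  shows "Q = fps_const (fps_nth Q 0 / fps_nth P 0) * P"
proof -
  define W where "W = Q * inverse P"
  have PP: "P * inverse P = 1"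
    using assms(1) by (rule inverse_mult_eq_1')
  have dW: "fps_deriv W = fps_deriv Q * inverse P - Q * fps_deriv P * (inverse P)\<^sup>2"
    by (simp add: W_def fps_inverse_deriv[OF assms(1)] algebra_simps)
  have "P\<^sup>2 * fps_deriv W =
      fps_deriv Q * P * (P * inverse P) - Q * fps_deriv P * (P * inverse P)\<^sup>2"
    unfolding dW by (simp add: algebra_simps power2_eq_square)
  then have "P\<^sup>2 * fps_deriv W = 0"
    using assms(2) by (simp add: PP)
  then have "fps_deriv W = 0"
    using assms(1) by (auto simp del: fps_deriv_eq_0_iff)
  then have "W = fps_const (fps_nth W 0)"
    by (rule iffD1[OF fps_deriv_eq_0_iff])
  also have "fps_nth W 0 = fps_nth Q 0 / fps_nth P 0"
    by (simp add: W_def divide_inverse del: fps_deriv_eq_0_iff)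
  finally have W: "W = fps_const (fps_nth Q 0 / fps_nth P 0)" .
  have "Q = Q * (P * inverse P)"
    by (simp add: PP)
  also have "\<dots> = W * P"
    by (simp add: W_def ac_simps)
  finally show ?thesis
    by (simp add: W)
qed

lemma fps_ode_first_integral:
  fixes P :: "'a::field_char_0 fps"
  assumes ode: "P\<^sup>2 * fps_deriv (fps_deriv P) = fps_const (2 * c) * (P - fps_X * fps_deriv P)"
    and "fps_nth P 0 = 1" and "fps_nth P 1 = b"
  shows "P * fps_deriv P = fps_const b * P + fps_const (2 * c) * fps_X"
proof -
  define Q where "Q = P * fps_deriv P - fps_const b * P - fps_const (2 * c) * fps_X"
  have "fps_deriv Q * P = P * fps_deriv P * fps_deriv P + P\<^sup>2 * fps_deriv (fps_deriv P)
      - fps_const b * P * fps_deriv P - fps_const (2 * c) * P"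
    by (simp add: Q_def algebra_simps power2_eq_square)
  also have "\<dots> = Q * fps_deriv P"
    unfolding ode Q_def by (simp add: algebra_simps)
  finally have "Q = fps_const (fps_nth Q 0 / fps_nth P 0) * P"
    using assms(2) by (intro fps_eq_const_mult_if_wronskian_eq_0) simp_all
  moreover have "fps_nth Q 0 = 0"
    using assms(2,3) by (simp add: Q_def)
  ultimately show ?thesis
    by (simp add: Q_def algebra_simps)
qed

definition fps_exp_comp :: "'a::field_char_0 fps \<Rightarrow> 'a \<Rightarrow> 'a fps" where
  "fps_exp_comp L s = fps_exp s oo L"

lemma fps_exp_comp_nth_0 [simp]: "fps_nth (fps_exp_comp L s) 0 = 1"
  by (simp add: fps_exp_comp_def)

lemma fps_exp_comp_nth:
  "fps_nth (fps_exp_comp L s) n = (\<Sum>k = 0..n. s ^ k / fact k * fps_nth (L ^ k) n)"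
  by (simp add: fps_exp_comp_def fps_compose_nth)

lemma fps_exp_comp_add:
  "fps_nth L 0 = 0 \<Longrightarrow> fps_exp_comp L (s + t) = fps_exp_comp L s * fps_exp_comp L t"
  by (simp add: fps_exp_comp_def fps_exp_add_mult fps_compose_mult_distrib)

lemma fps_exp_comp_deriv:
  "fps_nth L 0 = 0 \<Longrightarrow>
    fps_deriv (fps_exp_comp L s) = fps_const s * fps_exp_comp L s * fps_deriv L"
  by (simp add: fps_exp_comp_def fps_compose_deriv fps_const_mult_apply_left)

lemma fps_exp_comp_unique:
  fixes L P Y :: "'a::field_char_0 fps"
  assumes L0: "fps_nth L 0 = 0" and LP: "fps_deriv L * P = 1"
    and Y: "fps_deriv Y * P = fps_const c * Y"
  shows "Y = fps_const (fps_nth Y 0) * fps_exp_comp L c"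
proof -
  define E where "E = fps_exp_comp L c"
  have E: "fps_deriv E * P = fps_const c * E"
    using LP by (simp add: E_def fps_exp_comp_deriv[OF L0] mult.assoc)
  have "P \<noteq> 0"
    using LP by auto
  have "(fps_deriv Y * E) * P = E * (fps_deriv Y * P)"
    by (simp add: ac_simps)
  also have "\<dots> = Y * (fps_const c * E)"
    by (subst Y) (simp add: ac_simps)
  also have "\<dots> = Y * (fps_deriv E * P)"
    by (subst E) (simp add: ac_simps)
  also have "\<dots> = (Y * fps_deriv E) * P"
    by (simp add: ac_simps)
  finally have "fps_deriv Y * E = Y * fps_deriv E"
    using \<open>P \<noteq> 0\<close> by simp
  then show ?thesis
    using fps_eq_const_mult_if_wronskian_eq_0[of E Y] by (simp add: E_def)
qed

lemma fps_exp_comp_eq_if_ode: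
  fixes L P :: "'a::field_char_0 fps"
  assumes L0: "fps_nth L 0 = 0" and LP: "fps_deriv L * P = 1" and P0: "fps_nth P 0 = 1"
    and ode: "P * fps_deriv P = fps_const (\<alpha> + \<beta>) * P - fps_const (\<alpha> * \<beta>) * fps_X"
  shows "fps_exp_comp L \<alpha> = P - fps_const \<beta> * fps_X"
proof -
  have "fps_deriv (P - fps_const \<beta> * fps_X) * P = P * fps_deriv P - fps_const \<beta> * P"
    by (simp add: algebra_simps)
  also have "\<dots> = fps_const \<alpha> * (P - fps_const \<beta> * fps_X)"
    unfolding ode by (simp add: algebra_simps flip: fps_const_mult fps_const_add)
  finally have "P - fps_const \<beta> * fps_X =
      fps_const (fps_nth (P - fps_const \<beta> * fps_X) 0) * fps_exp_comp L \<alpha>"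
    by (rule fps_exp_comp_unique[OF L0 LP])
  then show ?thesis
    using P0 by simp
qed

lemma fps_exp_comp_recurrence:
  fixes L P :: "'a::field_char_0 fps"
  assumes L0: "fps_nth L 0 = 0" and LP: "fps_deriv L * P = 1"
    and P: "P = fps_exp_comp L \<alpha> + fps_const \<beta> * fps_X"
  shows "s * of_nat (Suc n) * fps_nth (fps_exp_comp L (s + \<alpha>)) (Suc n) =
    (s + \<alpha>) * (s - of_nat n * \<beta>) * fps_nth (fps_exp_comp L s) n"
proof -
  define E where "E = fps_exp_comp L"
  have dE: "fps_deriv (E t) = fps_const t * E t * fps_deriv L" for t
    unfolding E_def by (rule fps_exp_comp_deriv[OF L0])
  have E_add: "E (s + \<alpha>) = E s * E \<alpha>"
    unfolding E_def by (rule fps_exp_comp_add[OF L0])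
  have "fps_const s * fps_deriv (E (s + \<alpha>))
      + fps_const ((s + \<alpha>) * \<beta>) * (fps_X * fps_deriv (E s))
      = fps_const (s * (s + \<alpha>)) * E s * (fps_deriv L * P)"
    unfolding dE unfolding E_add P[folded E_def]
    by (simp add: algebra_simps flip: fps_const_mult fps_const_add)
  then have "fps_nth (fps_const s * fps_deriv (E (s + \<alpha>))
      + fps_const ((s + \<alpha>) * \<beta>) * (fps_X * fps_deriv (E s))) n =
      s * (s + \<alpha>) * fps_nth (E s) n"
    by (simp add: LP)
  then show ?thesis
    by (cases n) (simp_all add: E_def fps_X_mult_nth algebra_simps)
qed

definition fps_exp_comp_poly :: "'a::field_char_0 fps \<Rightarrow> nat \<Rightarrow> 'a poly" where
  "fps_exp_comp_poly L n = (\<Sum>k = 0..n. monom (fps_nth (L ^ k) n / fact k) k)"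

lemma poly_fps_exp_comp_poly: "poly (fps_exp_comp_poly L n) s = fps_nth (fps_exp_comp L s) n"
  by (simp add: fps_exp_comp_poly_def fps_exp_comp_nth poly_sum poly_monom algebra_simps)

lemma coeff_fps_exp_comp_poly_1: "1 \<le> n \<Longrightarrow> coeff (fps_exp_comp_poly L n) 1 = fps_nth L n"
  by (simp add: fps_exp_comp_poly_def coeff_sum coeff_monom sum.delta')

(* For alpha = beta this is the Abel polynomial s (s - n alpha)^(n-1) / n!. *)
definition abel_poly :: "'a::field_char_0 \<Rightarrow> 'a \<Rightarrow> nat \<Rightarrow> 'a poly" where
  "abel_poly \<alpha> \<beta> n = (if n = 0 then 1 else smult (1 / fact n)
     (pCons 0 (\<Prod>j = 1..n - 1. [:- (of_nat j * \<alpha> + of_nat (n - j) * \<beta>), 1:])))"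

lemma poly_abel_poly_Suc:
  "poly (abel_poly \<alpha> \<beta> (Suc n)) s =
    s / fact (Suc n) * (\<Prod>j = 1..n. s - (of_nat j * \<alpha> + of_nat (Suc n - j) * \<beta>))"
  by (simp add: abel_poly_def poly_prod algebra_simps)

lemma coeff_abel_poly_1:
  "1 \<le> n \<Longrightarrow> coeff (abel_poly \<alpha> \<beta> n) 1 =
    1 / fact n * (\<Prod>j = 1..n - 1. - (of_nat j * \<alpha> + of_nat (n - j) * \<beta>))"
  by (simp add: abel_poly_def poly_0_coeff_0[symmetric] poly_prod)

lemma abel_poly_recurrence:
  "s * of_nat (Suc n) * poly (abel_poly \<alpha> \<beta> (Suc n)) (s + \<alpha>) =
    (s + \<alpha>) * (s - of_nat n * \<beta>) * poly (abel_poly \<alpha> \<beta> n) s"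
proof (cases n)
  case 0
  then show ?thesis
    by (simp add: abel_poly_def)
next
  case (Suc k)
  define Q where "Q = (\<Prod>j = 1..k. s - (of_nat j * \<alpha> + of_nat (Suc k - j) * \<beta>))"
  have "(\<Prod>j = 1..Suc k. s + \<alpha> - (of_nat j * \<alpha> + of_nat (Suc (Suc k) - j) * \<beta>)) =
      (\<Prod>i = 0..k. s + \<alpha> - (of_nat (Suc i) * \<alpha> + of_nat (Suc (Suc k) - Suc i) * \<beta>))"
    by (simp only: One_nat_def prod.shift_bounds_cl_Suc_ivl)
  also have "\<dots> = (\<Prod>i = 0..k. s - (of_nat i * \<alpha> + of_nat (Suc k - i) * \<beta>))"
    by (simp add: algebra_simps)
  also have "\<dots> = (s - of_nat (Suc k) * \<beta>) * Q"
    by (simp add: Q_def prod.atLeast_Suc_atMost)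
  finally have "poly (abel_poly \<alpha> \<beta> (Suc (Suc k))) (s + \<alpha>) =
      (s + \<alpha>) / (of_nat (Suc (Suc k)) * fact (Suc k)) * ((s - of_nat (Suc k) * \<beta>) * Q)"
    by (simp only: poly_abel_poly_Suc fact_Suc[of "Suc k"] of_nat_mult)
  moreover have "poly (abel_poly \<alpha> \<beta> (Suc k)) s = s / fact (Suc k) * Q"
    by (simp add: poly_abel_poly_Suc Q_def)
  ultimately show ?thesis
    by (simp add: Suc del: of_nat_Suc fact_Suc)
qed

lemma poly_eqI_cofinite:
  fixes p q :: "'a::{idom,ring_char_0} poly"
  assumes "finite A" and "\<And>x. x \<notin> A \<Longrightarrow> poly p x = poly q x"
  shows "p = q"
proof (rule ccontr)
  assume "p \<noteq> q"
  then have "finite {x. poly (p - q) x = 0}"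
    by (intro poly_roots_finite) simp
  moreover have "UNIV \<subseteq> A \<union> {x. poly (p - q) x = 0}"
    using assms(2) by auto
  ultimately show False
    using assms(1) infinite_UNIV_char_0 finite_subset by blast
qed

lemma fps_exp_comp_poly_eq_abel_poly:
  fixes L P :: "'a::field_char_0 fps"
  assumes L0: "fps_nth L 0 = 0" and LP: "fps_deriv L * P = 1"
    and P: "P = fps_exp_comp L \<alpha> + fps_const \<beta> * fps_X"
  shows "fps_exp_comp_poly L n = abel_poly \<alpha> \<beta> n"
proof (induction n)
  case 0
  show ?case
    by (simp add: fps_exp_comp_poly_def abel_poly_def)
next
  case (Suc n)
  \<comment> \<open>The recurrence fixes the value at t = s + alpha only for s \<noteq> 0.\<close>
  show ?case
  proof (rule poly_eqI_cofinite[of "{\<alpha>}"])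
    fix t
    assume "t \<notin> {\<alpha>}"
    then have nz: "(t - \<alpha>) * of_nat (Suc n) \<noteq> 0"
      by (simp del: of_nat_Suc)
    have "(t - \<alpha>) * of_nat (Suc n) * poly (fps_exp_comp_poly L (Suc n)) (t - \<alpha> + \<alpha>) =
        t * (t - \<alpha> - of_nat n * \<beta>) * poly (fps_exp_comp_poly L n) (t - \<alpha>)"
      using fps_exp_comp_recurrence[OF L0 LP P, of "t - \<alpha>" n]
      by (simp add: poly_fps_exp_comp_poly)
    also have "\<dots> =
        (t - \<alpha>) * of_nat (Suc n) * poly (abel_poly \<alpha> \<beta> (Suc n)) (t - \<alpha> + \<alpha>)"
      using abel_poly_recurrence[of "t - \<alpha>" n \<alpha> \<beta>] by (simp add: Suc.IH)
    finally show "poly (fps_exp_comp_poly L (Suc n)) t = poly (abel_poly \<alpha> \<beta> (Suc n)) t"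
      using nz by simp
  qed simp
qed

lemma fps_nth_eq_abel_product:
  fixes L P :: "'a::field_char_0 fps"
  assumes "fps_nth L 0 = 0" and "fps_deriv L * P = 1"
    and "P = fps_exp_comp L \<alpha> + fps_const \<beta> * fps_X" and "1 \<le> n"
  shows "fps_nth L n =
    1 / fact n * (\<Prod>j = 1..n - 1. - (of_nat j * \<alpha> + of_nat (n - j) * \<beta>))"
  using coeff_fps_exp_comp_poly_1[of n L] coeff_abel_poly_1[of n \<alpha> \<beta>]
    fps_exp_comp_poly_eq_abel_poly[OF assms(1-3)] assms(4)
  by simp

lemma abel_log_nth_eq_product:
  fixes a :: "nat \<Rightarrow> 'a::field_char_0"
  assumes "abel_assoc a" and "\<alpha> + \<beta> = a 1" and "\<alpha> * \<beta> = - (2 * a 2)" and "1 \<le> n"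
  shows "fps_nth (abel_log a) n =
    1 / fact n * (\<Prod>j = 1..n - 1. - (of_nat j * \<alpha> + of_nat (n - j) * \<beta>))"
proof -
  define P where "P = abel_denom a"
  define L where "L = abel_log a"
  have P0: "fps_nth P 0 = 1" and "fps_nth P 1 = a 1"
    by (simp_all add: P_def abel_denom_def)
  have L: "L = fps_integral (inverse P) 0"
    by (simp add: L_def P_def abel_log_def abel_denom_def)
  then have L0: "fps_nth L 0 = 0"
    by simp
  have LP: "fps_deriv L * P = 1"
    using P0 by (simp add: L fps_deriv_fps_integral inverse_mult_eq_1)
  have "P * fps_deriv P = fps_const (a 1) * P + fps_const (2 * a 2) * fps_X"
    using fps_ode_first_integral abel_assoc_imp_denom_ode[OF assms(1)] P0 \<open>fps_nth P 1 = a 1\<close>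
    unfolding P_def by blast
  then have "P * fps_deriv P = fps_const (\<alpha> + \<beta>) * P - fps_const (\<alpha> * \<beta>) * fps_X"
    unfolding assms(2,3) by (simp flip: fps_const_neg)
  then have "P = fps_exp_comp L \<alpha> + fps_const \<beta> * fps_X"
    using fps_exp_comp_eq_if_ode[OF L0 LP P0] by simp
  then show ?thesis
    unfolding L_def[symmetric] using fps_nth_eq_abel_product[OF L0 LP _ assms(4)] by blast
qed

lemma prod_atLeastAtMost_pairs:
  fixes h :: "nat \<Rightarrow> 'a::comm_monoid_mult"
  assumes "2 \<le> n"
  shows "(\<Prod>j = 1..n - 1. h j) =
    (\<Prod>j \<in> {j. 1 \<le> j \<and> 2 * j < n}. h j * h (n - j)) * (if even n then h (n div 2) else 1)"
proof -
  define A where "A = {j. 1 \<le> j \<and> 2 * j < n}"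
  define M where "M = {j. 1 \<le> j \<and> 2 * j = n}"
  have fin: "finite A" "finite M"
    unfolding A_def M_def by (auto intro: finite_subset[of _ "{..n}"])
  have split: "{1..n - 1} = (A \<union> (\<lambda>j. n - j) ` A) \<union> M"
  proof (intro equalityI subsetI)
    fix k
    assume "k \<in> {1..n - 1}"
    then have "k \<in> A \<or> n - k \<in> A \<and> k = n - (n - k) \<or> k \<in> M"
      unfolding A_def M_def by auto
    then show "k \<in> (A \<union> (\<lambda>j. n - j) ` A) \<union> M"
      by blast
  qed (use assms in \<open>auto simp: A_def M_def\<close>)
  have inj: "inj_on (\<lambda>j. n - j) A"
    unfolding A_def inj_on_def by auto
  have disj: "A \<inter> (\<lambda>j. n - j) ` A = {}" "(A \<union> (\<lambda>j. n - j) ` A) \<inter> M = {}"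
    unfolding A_def M_def by auto
  have "M = (if even n then {n div 2} else {})"
    unfolding M_def using assms by auto
  then have "prod h M = (if even n then h (n div 2) else 1)"
    by simp
  moreover have "prod h ((\<lambda>j. n - j) ` A) = (\<Prod>j \<in> A. h (n - j))"
    using prod.reindex[OF inj] by simp
  ultimately show ?thesis
    unfolding split A_def[symmetric] using fin inj disj
    by (simp add: prod.union_disjoint prod.distrib)
qed

lemma prod_eq_if_pairs_eq:
  fixes f g :: "nat \<Rightarrow> 'a::comm_monoid_mult"
  assumes "2 \<le> n"
    and "\<And>j. 1 \<le> j \<Longrightarrow> 2 * j < n \<Longrightarrow> f j * f (n - j) = g j * g (n - j)"
    and "even n \<Longrightarrow> f (n div 2) = g (n div 2)"
  shows "(\<Prod>j = 1..n - 1. f j) = (\<Prod>j = 1..n - 1. g j)"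
  unfolding prod_atLeastAtMost_pairs[OF assms(1)] using assms(2,3) by (auto intro!: prod.cong)

lemma abel_factor_pair:
  fixes \<alpha> \<beta> :: complex and j k :: nat
  assumes "1 \<le> j" and "1 \<le> k"
  shows "(of_real ((real k - real j) / sqrt (real j * real k)) * csqrt (- (\<alpha> * \<beta>)) - (\<alpha> + \<beta>))
      * (of_real ((real j - real k) / sqrt (real k * real j)) * csqrt (- (\<alpha> * \<beta>)) - (\<alpha> + \<beta>))
    = (- (of_nat j * \<alpha> + of_nat k * \<beta>) / of_nat j) * (- (of_nat k * \<alpha> + of_nat j * \<beta>) / of_nat k)"
    (is "?lhs = ?rhs")
proof -
  define C where "C = (of_real ((real k - real j) / sqrt (real j * real k)) :: complex)"
  define w where "w = csqrt (- (\<alpha> * \<beta>))"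
  have neg: "of_real ((real j - real k) / sqrt (real k * real j)) = - C"
    by (simp add: C_def mult.commute minus_divide_left)
  have C2: "C\<^sup>2 = (of_nat k - of_nat j)\<^sup>2 / (of_nat j * of_nat k)"
    using assms unfolding C_def by (simp add: power_divide flip: of_real_power)
  have w2: "w\<^sup>2 = - (\<alpha> * \<beta>)"
    by (simp add: w_def)
  have "?lhs = (C * w - (\<alpha> + \<beta>)) * (- C * w - (\<alpha> + \<beta>))"
    unfolding neg by (simp only: C_def w_def)
  also have "\<dots> = (\<alpha> + \<beta>)\<^sup>2 - C\<^sup>2 * w\<^sup>2"
    by (simp add: algebra_simps power2_eq_square)
  also have "\<dots> = (\<alpha> + \<beta>)\<^sup>2 + (of_nat k - of_nat j)\<^sup>2 / (of_nat j * of_nat k) * (\<alpha> * \<beta>)"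
    by (simp add: C2 w2)
  also have "\<dots> = ?rhs"
    using assms by (simp add: field_simps power2_eq_square)
  finally show ?thesis .
qed

lemma abel_product_eq_sqrt_product:
  fixes \<alpha> \<beta> :: complex
  assumes n: "2 \<le> n"
  shows "1 / fact n * (\<Prod>j = 1..n - 1. - (of_nat j * \<alpha> + of_nat (n - j) * \<beta>)) =
    1 / of_nat n * (\<Prod>j = 1..n - 1.
      of_real ((real n - 2 * real j) / sqrt (real j * (real n - real j))) * csqrt (- (\<alpha> * \<beta>))
      - (\<alpha> + \<beta>))"
proof -
  define f where "f j = of_real ((real n - 2 * real j) / sqrt (real j * (real n - real j)))
    * csqrt (- (\<alpha> * \<beta>)) - (\<alpha> + \<beta>)" for j
  define g where "g j = - (of_nat j * \<alpha> + of_nat (n - j) * \<beta>) / (of_nat j :: complex)" for j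
  have "(\<Prod>j = 1..n - 1. f j) = (\<Prod>j = 1..n - 1. g j)"
  proof (rule prod_eq_if_pairs_eq[OF n])
    fix j
    assume j: "1 \<le> j" "2 * j < n"
    define k where "k = n - j"
    have k: "1 \<le> k" "n - k = j" "real n - 2 * real j = real k - real j" "real n - real j = real k"
      "real n - 2 * real k = real j - real k" "real n - real k = real j"
      using j by (auto simp: k_def)
    show "f j * f (n - j) = g j * g (n - j)"
      unfolding k_def[symmetric] f_def g_def k using abel_factor_pair[OF j(1) k(1)] by simp
  next
    assume "even n"
    then obtain k where k: "n = 2 * k"
      by blast
    then show "f (n div 2) = g (n div 2)"
      using n by (simp add: f_def g_def field_simps)
  qed
  also have "\<dots> = (\<Prod>j = 1..n - 1. - (of_nat j * \<alpha> + of_nat (n - j) * \<beta>)) / fact (n - 1)"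
    by (simp add: g_def prod_dividef fact_prod)
  finally show ?thesis
    using n by (simp add: f_def fact_reduce[of n])
qed

theorem proposition4p1:
  fixes a :: "nat \<Rightarrow> complex" and n :: nat
  assumes "abel_assoc a"
    and "n \<ge> 2"
  shows "fps_nth (abel_log a) n =
    (1 / of_nat n) * (\<Prod>j = 1..n - 1.
       (of_real ((real n - 2 * real j) / sqrt (real j * (real n - real j)))) * csqrt (2 * a 2) - a 1)"
proof -
  define \<delta> where "\<delta> = csqrt ((a 1)\<^sup>2 + 8 * a 2)"
  define \<alpha> where "\<alpha> = (a 1 + \<delta>) / 2"
  define \<beta> where "\<beta> = (a 1 - \<delta>) / 2"
  have roots_sum: "\<alpha> + \<beta> = a 1"
    by (simp add: \<alpha>_def \<beta>_def field_simps)
  have "\<delta>\<^sup>2 = (a 1)\<^sup>2 + 8 * a 2"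
    by (simp add: \<delta>_def)
  then have roots_prod: "\<alpha> * \<beta> = - (2 * a 2)"
    by (simp add: \<alpha>_def \<beta>_def field_simps power2_eq_square)
  have "fps_nth (abel_log a) n =
      1 / fact n * (\<Prod>j = 1..n - 1. - (of_nat j * \<alpha> + of_nat (n - j) * \<beta>))"
    using abel_log_nth_eq_product[OF assms(1) roots_sum roots_prod] assms(2) by simp
  also have "\<dots> = (1 / of_nat n) * (\<Prod>j = 1..n - 1.
       (of_real ((real n - 2 * real j) / sqrt (real j * (real n - real j)))) * csqrt (2 * a 2) - a 1)"
    using abel_product_eq_sqrt_product[OF assms(2), of \<alpha> \<beta>] by (simp add: roots_sum roots_prod)
  finally show ?thesis .
qed

end
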